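(* For any $m>8\pi$ there exist $\varepsilon>0$ and $\ell>0$ such that, with $\tau(t):=\varepsilon-\ell t$ and $a(t):=4e^{\tau(t)}$ for $t\in(0,\varepsilon/\ell)$, the function $$\underline M(\rho,t):=\frac{a(t)\rho}{\rho+\tau(t)^3},\qquad(\rho,t)\in[0,1]\times[0,\varepsilon/\ell),$$ satisfies $$\sup_{t\in(0,\varepsilon/\ell)}\underline M(1,t)<\frac{m}{2\pi},\qquad \inf_{\rho\in(0,1)}\underline M_\rho(\rho,t)>0\ \text{ for all }t\in[0,\varepsilon/\ell),$$ and $$\Theta\underline M\le0\quad\text{for all }\rho\in(0,1),\ t\in(0,\varepsilon/\ell).$$ In particular $\underline M(0,t)=0$ for all $t\in(0,\varepsilon/\ell)$, while $\underline M(\rho,t)\to4$ as $t\uparrow\varepsilon/\ell$ for every $\rho\in(0,1]$.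
   Context: For $T>0$ and $f\in C^{2,1}((0,1)\times(0,T))$ the operator $\Theta$ is defined by $$\Theta f:=f_t-4\rho f_{\rho\rho}-2f_\rho\Big(f-\frac{m\rho}{2\pi}\Big).$$ *)

theory Defs
  imports "HOL-Analysis.Analysis"
begin

definition Theta :: "real \<Rightarrow> (real \<Rightarrow> real \<Rightarrow> real) \<Rightarrow> real \<Rightarrow> real \<Rightarrow> real" where
  "Theta m f \<rho> t =
     deriv (\<lambda>s. f \<rho> s) t
     - 4 * \<rho> * deriv (\<lambda>r. deriv (\<lambda>q. f q t) r) \<rho>
     - 2 * deriv (\<lambda>r. f r t) \<rho> * (f \<rho> t - m * \<rho> / (2 * pi))"

end

theory Submission
  imports Defs
begin

text \<open>Take \<open>\<ell> = 1\<close>, so that \<open>\<tau> = \<epsilon> - t\<close> and \<open>M = subsolution \<epsilon>\<close>.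
  With \<open>D = \<rho> + \<tau>\<^sup>3\<close> a direct computation gives
  \<open>\<Theta>M = (a\<rho>/D\<^sup>3) (-D\<^sup>2 + 3\<tau>\<^sup>2D + 8\<tau>\<^sup>3 - 2a\<tau>\<^sup>3 + (m/\<pi>)\<tau>\<^sup>3D)\<close>.
  Since \<open>a = 4e\<^sup>\<tau> \<ge> 4(1 + \<tau>)\<close>, as soon as \<open>(m/\<pi>)\<tau> \<le> 1\<close> the bracket is at most
  \<open>-(D - 2\<tau>\<^sup>2)\<^sup>2 - 4\<tau>\<^sup>4 \<le> 0\<close>. The hypothesis \<open>m > 8\<pi>\<close>, i.e. \<open>4 < m/(2\<pi>)\<close>, leaves
  room to take \<open>\<epsilon>\<close> so small that moreover \<open>M(1,t) \<le> 4e\<^sup>\<epsilon> < m/(2\<pi>)\<close>.\<close>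

definition subsolution :: "real \<Rightarrow> real \<Rightarrow> real \<Rightarrow> real" where
  "subsolution \<epsilon> \<rho> t = 4 * exp (\<epsilon> - t) * \<rho> / (\<rho> + (\<epsilon> - t) ^ 3)"

lemma has_real_derivative_linear_fraction:
  fixes A c r :: real
  assumes "r + c \<noteq> 0"
  shows "((\<lambda>r. A * r / (r + c)) has_real_derivative A * c / (r + c)\<^sup>2) (at r)"
proof -
  have "(A * (r + c) - A * r) / ((r + c) * (r + c)) = A * c / (r + c)\<^sup>2"
    by (simp add: power2_eq_square algebra_simps)
  with assms show ?thesis by (auto intro!: derivative_eq_intros)
qed

lemma has_real_derivative_inverse_square:
  fixes A c r :: real
  assumes "r + c \<noteq> 0"
  shows "((\<lambda>r. A * c / (r + c)\<^sup>2) has_real_derivative - 2 * A * c / (r + c) ^ 3) (at r)"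
proof -
  have "A * c * (2 * D) / D ^ 4 = 2 * A * c / D ^ 3" if "D \<noteq> 0" for D :: real
    using that by (simp add: eval_nat_numeral field_simps)
  from this[of "r + c"] have "A * c * (2 * r + 2 * c) / (r + c) ^ 4 = 2 * A * c / (r + c) ^ 3"
    using assms by (metis distrib_left)
  with assms show ?thesis by (auto intro!: derivative_eq_intros)
qed

lemma deriv_deriv_linear_fraction:
  fixes A c r :: real
  assumes "r + c \<noteq> 0"
  shows "deriv (\<lambda>r. deriv (\<lambda>q. A * q / (q + c)) r) r = - 2 * A * c / (r + c) ^ 3"
proof -
  have "\<forall>\<^sub>F q in nhds r. q \<in> {q. q + c \<noteq> 0}"
    using assms by (intro eventually_nhds_in_open) (auto simp: open_Collect_neq continuous_intros)
  then have "\<forall>\<^sub>F q in nhds r. deriv (\<lambda>q. A * q / (q + c)) q = A * c / (q + c)\<^sup>2"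
    by eventually_elim (auto intro: DERIV_imp_deriv has_real_derivative_linear_fraction)
  then have "deriv (\<lambda>r. deriv (\<lambda>q. A * q / (q + c)) r) r = deriv (\<lambda>q. A * c / (q + c)\<^sup>2) r"
    by (rule deriv_cong_ev) simp
  also have "\<dots> = - 2 * A * c / (r + c) ^ 3"
    using assms by (intro DERIV_imp_deriv has_real_derivative_inverse_square)
  finally show ?thesis .
qed

lemma subsolution_zero [simp]: "subsolution \<epsilon> 0 t = 0"
  by (simp add: subsolution_def)

lemma deriv_subsolution_space:
  assumes "\<rho> + (\<epsilon> - t) ^ 3 \<noteq> 0"
  shows "deriv (\<lambda>r. subsolution \<epsilon> r t) \<rho>
    = 4 * exp (\<epsilon> - t) * (\<epsilon> - t) ^ 3 / (\<rho> + (\<epsilon> - t) ^ 3)\<^sup>2"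
  unfolding subsolution_def using assms
  by (intro DERIV_imp_deriv has_real_derivative_linear_fraction)

lemma deriv2_subsolution_space:
  assumes "\<rho> + (\<epsilon> - t) ^ 3 \<noteq> 0"
  shows "deriv (\<lambda>r. deriv (\<lambda>q. subsolution \<epsilon> q t) r) \<rho>
    = - 2 * (4 * exp (\<epsilon> - t)) * (\<epsilon> - t) ^ 3 / (\<rho> + (\<epsilon> - t) ^ 3) ^ 3"
  unfolding subsolution_def using assms by (rule deriv_deriv_linear_fraction)

lemma deriv_subsolution_time:
  assumes "\<rho> + (\<epsilon> - t) ^ 3 \<noteq> 0"
  shows "deriv (\<lambda>s. subsolution \<epsilon> \<rho> s) t
    = - 4 * exp (\<epsilon> - t) * \<rho> / (\<rho> + (\<epsilon> - t) ^ 3)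
      + 3 * (4 * exp (\<epsilon> - t)) * \<rho> * (\<epsilon> - t)\<^sup>2 / (\<rho> + (\<epsilon> - t) ^ 3)\<^sup>2"
proof -
  define \<tau> D where "\<tau> = \<epsilon> - t" and "D = \<rho> + \<tau> ^ 3"
  have "D \<noteq> 0" using assms by (simp add: D_def \<tau>_def)
  then have "(12 * (exp \<tau> * (\<rho> * \<tau>\<^sup>2)) - exp \<tau> * 4 * \<rho> * D) / (D * D)
    = - 4 * exp \<tau> * \<rho> / D + 3 * (4 * exp \<tau>) * \<rho> * \<tau>\<^sup>2 / D\<^sup>2"
    by (simp add: field_simps power2_eq_square)
  with assms show ?thesis
    unfolding subsolution_def D_def \<tau>_def by (intro DERIV_imp_deriv) (auto intro!: derivative_eq_intros)
qed

lemma Theta_subsolution: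
  fixes m \<epsilon> \<rho> t :: real
  defines "\<tau> \<equiv> \<epsilon> - t"
  defines "A \<equiv> 4 * exp \<tau>" and "D \<equiv> \<rho> + \<tau> ^ 3"
  assumes "D \<noteq> 0"
  shows "Theta m (subsolution \<epsilon>) \<rho> t
    = A * \<rho> / D ^ 3 * (- D\<^sup>2 + 3 * \<tau>\<^sup>2 * D + 8 * \<tau> ^ 3 - 2 * A * \<tau> ^ 3 + m / pi * \<tau> ^ 3 * D)"
proof -
  have nz: "\<rho> + (\<epsilon> - t) ^ 3 \<noteq> 0" using assms by (simp add: D_def \<tau>_def)
  have "Theta m (subsolution \<epsilon>) \<rho> t
    = - A * \<rho> / D + 3 * A * \<rho> * \<tau>\<^sup>2 / D\<^sup>2 - 4 * \<rho> * (- 2 * A * \<tau> ^ 3 / D ^ 3)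
      - 2 * (A * \<tau> ^ 3 / D\<^sup>2) * (A * \<rho> / D - m * \<rho> / (2 * pi))"
    unfolding Theta_def deriv_subsolution_time[OF nz] deriv_subsolution_space[OF nz]
      deriv2_subsolution_space[OF nz]
    by (simp add: subsolution_def A_def D_def \<tau>_def)
  also have "\<dots> = A * \<rho> / D ^ 3 * (- D\<^sup>2 + 3 * \<tau>\<^sup>2 * D + 8 * \<tau> ^ 3 - 2 * A * \<tau> ^ 3 + m / pi * \<tau> ^ 3 * D)"
    using \<open>D \<noteq> 0\<close> by (simp add: field_simps eval_nat_numeral)
  finally show ?thesis .
qed

lemma Theta_bracket_nonpos:
  fixes \<tau> D A k :: real
  assumes "\<tau> \<ge> 0" "D \<ge> 0" "A \<ge> 4 * (1 + \<tau>)" "k * \<tau> \<le> 1"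
  shows "- D\<^sup>2 + 3 * \<tau>\<^sup>2 * D + 8 * \<tau> ^ 3 - 2 * A * \<tau> ^ 3 + k * \<tau> ^ 3 * D \<le> 0"
proof -
  have "k * \<tau> * (\<tau>\<^sup>2 * D) \<le> 1 * (\<tau>\<^sup>2 * D)"
    using assms by (intro mult_right_mono) auto
  moreover have "4 * (1 + \<tau>) * \<tau> ^ 3 \<le> A * \<tau> ^ 3"
    using assms by (intro mult_right_mono) auto
  ultimately have "- D\<^sup>2 + 3 * \<tau>\<^sup>2 * D + 8 * \<tau> ^ 3 - 2 * A * \<tau> ^ 3 + k * \<tau> ^ 3 * D
      \<le> - (D - 2 * \<tau>\<^sup>2)\<^sup>2 - 4 * (\<tau>\<^sup>2)\<^sup>2"
    by (simp add: algebra_simps eval_nat_numeral)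
  also have "\<dots> \<le> 0"
    using zero_le_power2[of "D - 2 * \<tau>\<^sup>2"] zero_le_power2[of "\<tau>\<^sup>2"] by linarith
  finally show ?thesis .
qed

lemma Theta_subsolution_nonpos:
  assumes "0 < \<rho>" "t < \<epsilon>" "m / pi * (\<epsilon> - t) \<le> 1"
  shows "Theta m (subsolution \<epsilon>) \<rho> t \<le> 0"
proof -
  define \<tau> where "\<tau> = \<epsilon> - t"
  have "\<tau> > 0" using assms by (simp add: \<tau>_def)
  then have D: "\<rho> + \<tau> ^ 3 > 0" using assms by (simp add: add_pos_pos)
  have Theta_eq: "Theta m (subsolution \<epsilon>) \<rho> t = 4 * exp \<tau> * \<rho> / (\<rho> + \<tau> ^ 3) ^ 3
      * (- (\<rho> + \<tau> ^ 3)\<^sup>2 + 3 * \<tau>\<^sup>2 * (\<rho> + \<tau> ^ 3) + 8 * \<tau> ^ 3 - 2 * (4 * exp \<tau>) * \<tau> ^ 3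
        + m / pi * \<tau> ^ 3 * (\<rho> + \<tau> ^ 3))"
    unfolding \<tau>_def using D by (intro Theta_subsolution) (simp add: \<tau>_def)
  have "4 * (1 + \<tau>) \<le> 4 * exp \<tau>" by (intro mult_left_mono exp_ge_add_one_self) simp
  then have "- (\<rho> + \<tau> ^ 3)\<^sup>2 + 3 * \<tau>\<^sup>2 * (\<rho> + \<tau> ^ 3) + 8 * \<tau> ^ 3 - 2 * (4 * exp \<tau>) * \<tau> ^ 3
      + m / pi * \<tau> ^ 3 * (\<rho> + \<tau> ^ 3) \<le> 0"
    using assms D \<open>\<tau> > 0\<close> by (intro Theta_bracket_nonpos) (auto simp: \<tau>_def)
  moreover have "0 \<le> 4 * exp \<tau> * \<rho> / (\<rho> + \<tau> ^ 3) ^ 3" using assms D by simp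
  ultimately show ?thesis
    unfolding Theta_eq by (rule mult_nonneg_nonpos[rotated])
qed

lemma subsolution_one_le:
  assumes "0 \<le> t" "t < \<epsilon>"
  shows "subsolution \<epsilon> 1 t \<le> 4 * exp \<epsilon>"
proof -
  have "(\<epsilon> - t) ^ 3 > 0" using assms by simp
  then have "0 < 1 + (\<epsilon> - t) ^ 3" by linarith
  then have "subsolution \<epsilon> 1 t \<le> 4 * exp (\<epsilon> - t) / 1"
    unfolding subsolution_def mult_1_right using assms by (intro divide_left_mono) auto
  also have "\<dots> \<le> 4 * exp \<epsilon>" using assms by simp
  finally show ?thesis .
qed

lemma deriv_subsolution_space_ge:
  assumes "0 < \<rho>" "\<rho> < 1" "t < \<epsilon>"
  shows "4 * exp (\<epsilon> - t) * (\<epsilon> - t) ^ 3 / (1 + (\<epsilon> - t) ^ 3)\<^sup>2 \<le> deriv (\<lambda>r. subsolution \<epsilon> r t) \<rho>"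
proof -
  have "(\<epsilon> - t) ^ 3 > 0" using assms by simp
  then have c: "0 < (\<epsilon> - t) ^ 3" "0 < \<rho> + (\<epsilon> - t) ^ 3" "0 < 1 + (\<epsilon> - t) ^ 3"
    using assms by linarith+
  then have "(\<rho> + (\<epsilon> - t) ^ 3)\<^sup>2 \<le> (1 + (\<epsilon> - t) ^ 3)\<^sup>2"
    using assms by (intro power_mono) auto
  then have "4 * exp (\<epsilon> - t) * (\<epsilon> - t) ^ 3 / (1 + (\<epsilon> - t) ^ 3)\<^sup>2
      \<le> 4 * exp (\<epsilon> - t) * (\<epsilon> - t) ^ 3 / (\<rho> + (\<epsilon> - t) ^ 3)\<^sup>2"
    using assms c by (intro divide_left_mono mult_pos_pos) auto
  then show ?thesis
    using assms c by (simp add: deriv_subsolution_space)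
qed

lemma INF_deriv_subsolution_space_pos:
  assumes "t < \<epsilon>"
  shows "bdd_below ((\<lambda>\<rho>. deriv (\<lambda>r. subsolution \<epsilon> r t) \<rho>) ` {0<..<1})
    \<and> (INF \<rho>\<in>{0<..<1}. deriv (\<lambda>r. subsolution \<epsilon> r t) \<rho>) > 0"
proof
  let ?b = "4 * exp (\<epsilon> - t) * (\<epsilon> - t) ^ 3 / (1 + (\<epsilon> - t) ^ 3)\<^sup>2"
  have b: "?b \<le> deriv (\<lambda>r. subsolution \<epsilon> r t) \<rho>" if "\<rho> \<in> {0<..<1}" for \<rho>
    using that assms by (intro deriv_subsolution_space_ge) auto
  then show "bdd_below ((\<lambda>\<rho>. deriv (\<lambda>r. subsolution \<epsilon> r t) \<rho>) ` {0<..<1})"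
    by (intro bdd_belowI2) auto
  have "(\<epsilon> - t) ^ 3 > 0" using assms by simp
  then have "0 < 1 + (\<epsilon> - t) ^ 3" by linarith
  with assms have "0 < ?b" by (intro divide_pos_pos mult_pos_pos) auto
  also have "?b \<le> (INF \<rho>\<in>{0<..<1}. deriv (\<lambda>r. subsolution \<epsilon> r t) \<rho>)"
    using b by (intro cINF_greatest) auto
  finally show "(INF \<rho>\<in>{0<..<1}. deriv (\<lambda>r. subsolution \<epsilon> r t) \<rho>) > 0" .
qed

lemma tendsto_subsolution:
  assumes "\<rho> \<noteq> 0"
  shows "((\<lambda>t. subsolution \<epsilon> \<rho> t) \<longlongrightarrow> 4) (at_left \<epsilon>)"
proof -
  have "((\<lambda>t. subsolution \<epsilon> \<rho> t) \<longlongrightarrow> subsolution \<epsilon> \<rho> \<epsilon>) (at \<epsilon>)"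
    unfolding subsolution_def using assms by (intro tendsto_intros) auto
  then show ?thesis
    using assms by (simp add: subsolution_def filterlim_at_split)
qed

lemma exists_small_epsilon:
  fixes m :: real
  assumes "m > 8 * pi"
  shows "\<exists>\<epsilon>>0. 4 * exp \<epsilon> < m / (2 * pi) \<and> m / pi * \<epsilon> \<le> 1"
proof -
  have "((\<lambda>\<epsilon>. 4 * exp \<epsilon>) \<longlongrightarrow> 4) (at_right (0::real))"
    by (auto intro!: tendsto_eq_intros)
  moreover have "4 < m / (2 * pi)"
    using assms by (simp add: field_simps)
  ultimately have "\<forall>\<^sub>F \<epsilon> in at_right 0. 4 * exp \<epsilon> < m / (2 * pi)"
    by (rule order_tendstoD(2))
  moreover have "((\<lambda>\<epsilon>. m / pi * \<epsilon>) \<longlongrightarrow> 0) (at_right (0::real))"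
    by (auto intro!: tendsto_eq_intros)
  then have "\<forall>\<^sub>F \<epsilon> in at_right 0. m / pi * \<epsilon> < 1"
    by (rule order_tendstoD(2)) simp
  moreover have "\<forall>\<^sub>F \<epsilon> in at_right (0::real). \<epsilon> > 0"
    by (rule eventually_at_right_less)
  ultimately have "\<forall>\<^sub>F \<epsilon> in at_right 0. \<epsilon> > 0 \<and> 4 * exp \<epsilon> < m / (2 * pi) \<and> m / pi * \<epsilon> \<le> 1"
    by eventually_elim auto
  then show ?thesis
    by (rule eventually_happens'[OF trivial_limit_at_right_real, THEN exE]) blast
qed

theorem lemma2p1:
  fixes m :: real
  assumes "m > 8 * pi"
  shows "\<exists>\<epsilon>>0. \<exists>l>0.
    (let \<tau> = (\<lambda>t::real. \<epsilon> - l * t);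
         a = (\<lambda>t. 4 * exp (\<tau> t));
         M = (\<lambda>\<rho> t. a t * \<rho> / (\<rho> + (\<tau> t) ^ 3));
         T = \<epsilon> / l
     in bdd_above ((\<lambda>t. M 1 t) ` {0<..<T})
        \<and> (SUP t\<in>{0<..<T}. M 1 t) < m / (2 * pi)
        \<and> (\<forall>t\<in>{0..<T}. bdd_below ((\<lambda>\<rho>. deriv (\<lambda>r. M r t) \<rho>) ` {0<..<1})
               \<and> (INF \<rho>\<in>{0<..<1}. deriv (\<lambda>r. M r t) \<rho>) > 0)
        \<and> (\<forall>\<rho>\<in>{0<..<1}. \<forall>t\<in>{0<..<T}. Theta m M \<rho> t \<le> 0)
        \<and> (\<forall>t\<in>{0<..<T}. M 0 t = 0)
        \<and> (\<forall>\<rho>\<in>{0<..1}. ((\<lambda>t. M \<rho> t) \<longlongrightarrow> 4) (at_left T)))"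
proof -
  obtain \<epsilon> where \<epsilon>: "\<epsilon> > 0" "4 * exp \<epsilon> < m / (2 * pi)" "m / pi * \<epsilon> \<le> 1"
    using exists_small_epsilon[OF assms] by blast
  have at_one: "subsolution \<epsilon> 1 t \<le> 4 * exp \<epsilon>" if "t \<in> {0<..<\<epsilon>}" for t
    using that by (intro subsolution_one_le) auto
  have SUP_at_one: "(SUP t\<in>{0<..<\<epsilon>}. subsolution \<epsilon> 1 t) \<le> 4 * exp \<epsilon>"
    using at_one \<epsilon> by (intro cSUP_least) auto
  have small: "m / pi * (\<epsilon> - t) \<le> 1" if "t > 0" for t
  proof -
    have "m > 0" using assms pi_gt_zero by linarith
    with that have "m / pi * (\<epsilon> - t) \<le> m / pi * \<epsilon>"
      by (intro mult_left_mono) auto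
    with \<epsilon> show ?thesis by linarith
  qed
  show ?thesis
    apply (rule exI[of _ \<epsilon>], intro conjI \<open>\<epsilon> > 0\<close> exI[of _ "1::real"] zero_less_one)
    unfolding Let_def mult_1 div_by_1 subsolution_def[symmetric] using \<epsilon> at_one SUP_at_one small
    by (intro conjI ballI bdd_aboveI2 Theta_subsolution_nonpos
        INF_deriv_subsolution_space_pos tendsto_subsolution) auto
qed

end
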